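(* For every $n$, $F_{\wedge,\to}(n)\cong\mathcal U(U(n)_{\wedge,\to})$ as implicative meet-semilattices.
   Context: $F_{\wedge,\to}(n)$ is the free implicative meet-semilattice on $p_1,\dots,p_n$ (the $(\wedge,\to)$-formulas in $p_1,\dots,p_n$ modulo IPC-equivalence). $\mathcal U(X)$ is the Heyting algebra of up-sets of a poset $X$. Models are posets with order-preserving colouring $c:M\to\{0,1\}^n$ and intuitionistic Kripke semantics ($x\models p_i$ iff $c(x)_i=1$). A point $x$ is separated if for some variable $q$, $x\not\models q$ but all $y>x$ satisfy $q$; $M^s$ is the set of separated points with restricted order and colouring. $U(n)$ is the $n$-universal model: the generated submodel of the canonical model of IPC on $p_1,\dots,p_n$ (prime filters of the free Heyting algebra ordered by inclusion, $c(x)_i=1$ iff $p_i\in x$) consisting of points with finite up-set. For every model of finite depth there is a unique p-morphism into $U(n)$; $U(n)_{\wedge,\to}$ is the image of the unique p-morphism $U(n)^s\to U(n)$. *)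

theory Defs
  imports Main
begin

text \<open>Variables p_1,...,p_n are represented as Var 0, ..., Var (n-1).\<close>

datatype fm = Var nat | Top | Bot | And fm fm | Or fm fm | Imp fm fm

inductive prv :: "fm \<Rightarrow> bool" where
  ax_top: "prv Top"
| ax_k: "prv (Imp A (Imp B A))"
| ax_s: "prv (Imp (Imp A (Imp B C)) (Imp (Imp A B) (Imp A C)))"
| ax_and1: "prv (Imp (And A B) A)"
| ax_and2: "prv (Imp (And A B) B)"
| ax_andI: "prv (Imp A (Imp B (And A B)))"
| ax_or1: "prv (Imp A (Or A B))"
| ax_or2: "prv (Imp B (Or A B))"
| ax_orE: "prv (Imp (Imp A C) (Imp (Imp B C) (Imp (Or A B) C)))"
| ax_bot: "prv (Imp Bot A)"
| mp: "prv (Imp A B) \<Longrightarrow> prv A \<Longrightarrow> prv B"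

definition ipc_equiv :: "fm \<Rightarrow> fm \<Rightarrow> bool" where
  "ipc_equiv A B \<longleftrightarrow> prv (Imp A B) \<and> prv (Imp B A)"

fun vars :: "fm \<Rightarrow> nat set" where
  "vars (Var i) = {i}"
| "vars Top = {}"
| "vars Bot = {}"
| "vars (And A B) = vars A \<union> vars B"
| "vars (Or A B) = vars A \<union> vars B"
| "vars (Imp A B) = vars A \<union> vars B"

text \<open>(\<and>,\<rightarrow>)-formulas (with the constant top of implicative meet-semilattices).\<close>
fun conj_imp :: "fm \<Rightarrow> bool" where
  "conj_imp (Var i) = True"
| "conj_imp Top = True"
| "conj_imp Bot = False"
| "conj_imp (And A B) = (conj_imp A \<and> conj_imp B)"
| "conj_imp (Or A B) = False"
| "conj_imp (Imp A B) = (conj_imp A \<and> conj_imp B)"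

definition Fm :: "nat \<Rightarrow> fm set" where
  "Fm n = {A. vars A \<subseteq> {..<n}}"

definition IFm :: "nat \<Rightarrow> fm set" where
  "IFm n = {A. vars A \<subseteq> {..<n} \<and> conj_imp A}"

definition cls :: "nat \<Rightarrow> fm \<Rightarrow> fm set" where
  "cls n A = {B \<in> Fm n. ipc_equiv A B}"

definition lind :: "nat \<Rightarrow> fm set set" where
  "lind n = cls n ` Fm n"

definition lind_le :: "fm set \<Rightarrow> fm set \<Rightarrow> bool" where
  "lind_le a b \<longleftrightarrow> (\<exists>A\<in>a. \<exists>B\<in>b. prv (Imp A B))"

definition prime_filter :: "nat \<Rightarrow> fm set set \<Rightarrow> bool" where
  "prime_filter n F \<longleftrightarrow>
     F \<subseteq> lind n \<and>
     cls n Top \<in> F \<and>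
     cls n Bot \<notin> F \<and>
     (\<forall>a\<in>F. \<forall>b\<in>lind n. lind_le a b \<longrightarrow> b \<in> F) \<and>
     (\<forall>A\<in>Fm n. \<forall>B\<in>Fm n. cls n A \<in> F \<and> cls n B \<in> F \<longrightarrow> cls n (And A B) \<in> F) \<and>
     (\<forall>A\<in>Fm n. \<forall>B\<in>Fm n. cls n (Or A B) \<in> F \<longrightarrow> cls n A \<in> F \<or> cls n B \<in> F)"

text \<open>A model is given by a carrier set W, an order le, and a colouring
  c, where c x i stands for c(x)_i = 1 (only i < n is relevant).\<close>

definition p_morphism ::
  "nat \<Rightarrow> 'a set \<Rightarrow> ('a \<Rightarrow> 'a \<Rightarrow> bool) \<Rightarrow> ('a \<Rightarrow> nat \<Rightarrow> bool) \<Rightarrow>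
   'b set \<Rightarrow> ('b \<Rightarrow> 'b \<Rightarrow> bool) \<Rightarrow> ('b \<Rightarrow> nat \<Rightarrow> bool) \<Rightarrow> ('a \<Rightarrow> 'b) \<Rightarrow> bool" where
  "p_morphism n M leM cM N leN cN f \<longleftrightarrow>
     (\<forall>x\<in>M. f x \<in> N) \<and>
     (\<forall>x\<in>M. \<forall>y\<in>M. leM x y \<longrightarrow> leN (f x) (f y)) \<and>
     (\<forall>x\<in>M. \<forall>z\<in>N. leN (f x) z \<longrightarrow> (\<exists>y\<in>M. leM x y \<and> f y = z)) \<and>
     (\<forall>x\<in>M. \<forall>i<n. cN (f x) i = cM x i)"

definition separated_points ::
  "nat \<Rightarrow> 'a set \<Rightarrow> ('a \<Rightarrow> 'a \<Rightarrow> bool) \<Rightarrow> ('a \<Rightarrow> nat \<Rightarrow> bool) \<Rightarrow> 'a set" where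
  "separated_points n M le c =
     {x\<in>M. \<exists>q<n. \<not> c x q \<and> (\<forall>y\<in>M. le x y \<and> x \<noteq> y \<longrightarrow> c y q)}"

text \<open>Points of the canonical model: prime filters, ordered by inclusion;
  the colouring: c(x)_i = 1 iff p_i \<in> x.\<close>

definition canon_col :: "nat \<Rightarrow> fm set set \<Rightarrow> nat \<Rightarrow> bool" where
  "canon_col n x i \<longleftrightarrow> cls n (Var i) \<in> x"

definition univ_model :: "nat \<Rightarrow> fm set set set" where
  "univ_model n = {x. prime_filter n x \<and> finite {y. prime_filter n y \<and> x \<subseteq> y}}"

text \<open>U(n)_{\<and>,\<rightarrow>}: image of the (unique) p-morphism U(n)^s \<rightarrow> U(n).\<close>
definition univ_ci :: "nat \<Rightarrow> fm set set set" where
  "univ_ci n = \<Union>{f ` separated_points n (univ_model n) (\<subseteq>) (canon_col n) | f.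
       p_morphism n (separated_points n (univ_model n) (\<subseteq>) (canon_col n)) (\<subseteq>) (canon_col n)
                    (univ_model n) (\<subseteq>) (canon_col n) f}"

definition upsets :: "'a set \<Rightarrow> ('a \<Rightarrow> 'a \<Rightarrow> bool) \<Rightarrow> 'a set set" where
  "upsets X le = {A. A \<subseteq> X \<and> (\<forall>x\<in>A. \<forall>y\<in>X. le x y \<longrightarrow> y \<in> A)}"

definition up_imp :: "'a set \<Rightarrow> ('a \<Rightarrow> 'a \<Rightarrow> bool) \<Rightarrow> 'a set \<Rightarrow> 'a set \<Rightarrow> 'a set" where
  "up_imp X le A B = {x\<in>X. \<forall>y\<in>X. le x y \<longrightarrow> y \<in> A \<longrightarrow> y \<in> B}"

end

theory Submission
  imports Defs
begin

text \<open>The isomorphism sends an (\<and>,\<rightarrow>)-formula A to its truth set, the points of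
  U(n)_{\<and>,\<rightarrow>} containing the class of A. Points of U(n) are prime filters of finite depth,
  and by Lindenbaum's lemma the class of A \<rightarrow> B lies in such a filter x iff every prime
  filter above x containing A contains B. Since U(n)_{\<and>,\<rightarrow>} is an up-set of U(n), truth sets
  are up-sets and \<and>, \<rightarrow> become intersection and the Heyting implication of up-sets.

  Injectivity: a non-derivable (\<and>,\<rightarrow>)-implication is refuted in a finite canonical model,
  hence at a point of U(n). A maximal point above it refuting the conclusion is separated, and
  the p-morphism U(n)^s \<rightarrow> U(n) preserves the truth of (\<and>,\<rightarrow>)-formulas, so the
  implication is refuted in U(n)_{\<and>,\<rightarrow>}.

  Surjectivity: U(n)_{\<and>,\<rightarrow>} is finite, its points are separated, and each point x has an
  (\<and>,\<rightarrow>)-formula true exactly outside the down-set of x, built by induction on the number of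
  variables false at x. An up-set is the truth set of the conjunction of the formulas of the
  points outside it.\<close>

lemma prv_refl: "prv (Imp A A)"
  by (meson ax_k ax_s mp)

lemma prv_weaken: "prv B \<Longrightarrow> prv (Imp A B)"
  by (meson ax_k mp)

lemma prv_imp_mp: "prv (Imp G (Imp X Y)) \<Longrightarrow> prv (Imp G X) \<Longrightarrow> prv (Imp G Y)"
  by (meson ax_s mp)

lemma prv_trans: "prv (Imp A B) \<Longrightarrow> prv (Imp B C) \<Longrightarrow> prv (Imp A C)"
  by (meson prv_weaken prv_imp_mp)

lemma prv_imp_andI: "prv (Imp G X) \<Longrightarrow> prv (Imp G Y) \<Longrightarrow> prv (Imp G (And X Y))"
  by (meson ax_andI prv_weaken prv_imp_mp)

lemma prv_export: "prv (Imp (And G D) E) \<Longrightarrow> prv (Imp G (Imp D E))"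
  by (meson ax_andI ax_s mp prv_weaken prv_trans)

fun conjl :: "fm list \<Rightarrow> fm" where
  "conjl [] = Top"
| "conjl (A # As) = And A (conjl As)"

fun disjl :: "fm list \<Rightarrow> fm" where
  "disjl [] = Bot"
| "disjl (A # As) = Or A (disjl As)"

lemma prv_conjl_elem: "A \<in> set As \<Longrightarrow> prv (Imp (conjl As) A)"
  by (induction As) (auto intro: ax_and1 prv_trans[OF ax_and2])

lemma prv_conjl_intro: "(\<And>A. A \<in> set As \<Longrightarrow> prv (Imp G A)) \<Longrightarrow> prv (Imp G (conjl As))"
  by (induction As) (auto simp: ax_top prv_weaken prv_imp_andI)

lemma prv_conjl_mono: "set As \<subseteq> set Bs \<Longrightarrow> prv (Imp (conjl Bs) (conjl As))"
  by (meson prv_conjl_elem prv_conjl_intro subsetD)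

definition derives :: "fm set \<Rightarrow> fm \<Rightarrow> bool" where
  "derives \<Gamma> C \<longleftrightarrow> (\<exists>Ds. set Ds \<subseteq> \<Gamma> \<and> prv (Imp (conjl Ds) C))"

lemma derives_mem: "C \<in> \<Gamma> \<Longrightarrow> derives \<Gamma> C"
  unfolding derives_def by (rule exI[of _ "[C]"]) (simp add: ax_and1)

lemma derives_prv: "prv C \<Longrightarrow> derives \<Gamma> C"
  unfolding derives_def by (rule exI[of _ "[]"]) (simp add: prv_weaken)

lemma derives_common_premises:
  assumes "derives \<Gamma> X" and "derives \<Gamma> Y"
  obtains Ds where "set Ds \<subseteq> \<Gamma>" "prv (Imp (conjl Ds) X)" "prv (Imp (conjl Ds) Y)"
proof -
  obtain Ds Es where "set Ds \<subseteq> \<Gamma>" "prv (Imp (conjl Ds) X)" "set Es \<subseteq> \<Gamma>" "prv (Imp (conjl Es) Y)"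
    using assms unfolding derives_def by blast
  moreover have "prv (Imp (conjl (Ds @ Es)) (conjl Ds))" "prv (Imp (conjl (Ds @ Es)) (conjl Es))"
    by (simp_all add: prv_conjl_mono)
  ultimately show thesis using that[of "Ds @ Es"] prv_trans by auto
qed

lemma derives_andI: "derives \<Gamma> X \<Longrightarrow> derives \<Gamma> Y \<Longrightarrow> derives \<Gamma> (And X Y)"
  by (metis derives_common_premises derives_def prv_imp_andI)

lemma derives_mp: "derives \<Gamma> (Imp X Y) \<Longrightarrow> derives \<Gamma> X \<Longrightarrow> derives \<Gamma> Y"
  by (metis derives_common_premises derives_def prv_imp_mp)

lemma derives_prv_mp: "prv (Imp X Y) \<Longrightarrow> derives \<Gamma> X \<Longrightarrow> derives \<Gamma> Y"
  using derives_mp derives_prv by blast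

lemma derives_deduct:
  assumes "derives (insert D \<Gamma>) E"
  shows "derives \<Gamma> (Imp D E)"
proof -
  obtain Ds where Ds: "set Ds \<subseteq> insert D \<Gamma>" "prv (Imp (conjl Ds) E)"
    using assms unfolding derives_def by blast
  let ?Es = "filter (\<lambda>C. C \<noteq> D) Ds"
  have "prv (Imp (And (conjl ?Es) D) C)" if "C \<in> set Ds" for C
  proof (cases "C = D")
    case False
    then have "C \<in> set ?Es" using that by simp
    then show ?thesis using prv_conjl_elem ax_and1 prv_trans by blast
  qed (simp add: ax_and2)
  then have "prv (Imp (And (conjl ?Es) D) E)"
    using Ds(2) prv_conjl_intro prv_trans by blast
  moreover have "set ?Es \<subseteq> \<Gamma>" using Ds(1) by auto
  ultimately show ?thesis unfolding derives_def using prv_export by blast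
qed

lemma derives_cut:
  assumes "\<And>C. C \<in> \<Delta> \<Longrightarrow> derives \<Gamma> C" and "derives \<Delta> E"
  shows "derives \<Gamma> E"
proof -
  obtain Ds where Ds: "set Ds \<subseteq> \<Delta>" "prv (Imp (conjl Ds) E)"
    using assms(2) unfolding derives_def by blast
  have "derives \<Gamma> (conjl Ds)"
    using Ds(1) assms(1) by (induction Ds) (auto simp: ax_top derives_prv derives_andI)
  then show ?thesis using Ds(2) derives_prv_mp by blast
qed

lemma derives_orE:
  "derives (insert C \<Gamma>) B \<Longrightarrow> derives (insert D \<Gamma>) B \<Longrightarrow> derives \<Gamma> (Or C D) \<Longrightarrow> derives \<Gamma> B"
  by (meson ax_orE derives_deduct derives_mp derives_prv)

lemma derives_chain_Union:
  assumes "\<C> \<noteq> {}" and chain: "\<And>X Y. X \<in> \<C> \<Longrightarrow> Y \<in> \<C> \<Longrightarrow> X \<subseteq> Y \<or> Y \<subseteq> X"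
    and "derives (\<Union>\<C>) B"
  shows "\<exists>X\<in>\<C>. derives X B"
proof -
  obtain Ds where Ds: "set Ds \<subseteq> \<Union>\<C>" "prv (Imp (conjl Ds) B)"
    using assms(3) unfolding derives_def by blast
  have "\<exists>X\<in>\<C>. set Ds \<subseteq> X"
    using Ds(1)
  proof (induction Ds)
    case Nil then show ?case using assms(1) by auto
  next
    case (Cons A Ds)
    then obtain X Y where "X \<in> \<C>" "set Ds \<subseteq> X" "Y \<in> \<C>" "A \<in> Y" by auto
    then show ?case using chain[of X Y] by auto
  qed
  then show ?thesis using Ds(2) unfolding derives_def by blast
qed

lemma ipc_equiv_refl: "ipc_equiv A A"
  by (simp add: ipc_equiv_def prv_refl)

lemma ipc_equiv_sym: "ipc_equiv A B \<Longrightarrow> ipc_equiv B A"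
  by (simp add: ipc_equiv_def)

lemma ipc_equiv_trans: "ipc_equiv A B \<Longrightarrow> ipc_equiv B C \<Longrightarrow> ipc_equiv A C"
  unfolding ipc_equiv_def using prv_trans by blast

lemma Fm_simps [simp]:
  "Var i \<in> Fm n \<longleftrightarrow> i < n" "Top \<in> Fm n" "Bot \<in> Fm n"
  "And A B \<in> Fm n \<longleftrightarrow> A \<in> Fm n \<and> B \<in> Fm n"
  "Or A B \<in> Fm n \<longleftrightarrow> A \<in> Fm n \<and> B \<in> Fm n"
  "Imp A B \<in> Fm n \<longleftrightarrow> A \<in> Fm n \<and> B \<in> Fm n"
  by (auto simp: Fm_def)

lemma IFm_simps [simp]:
  "Var i \<in> IFm n \<longleftrightarrow> i < n" "Top \<in> IFm n" "Bot \<notin> IFm n"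
  "And A B \<in> IFm n \<longleftrightarrow> A \<in> IFm n \<and> B \<in> IFm n"
  "Or A B \<notin> IFm n"
  "Imp A B \<in> IFm n \<longleftrightarrow> A \<in> IFm n \<and> B \<in> IFm n"
  by (auto simp: IFm_def)

lemma IFm_subset_Fm: "IFm n \<subseteq> Fm n"
  by (auto simp: IFm_def Fm_def)

lemmas IFm_Fm = IFm_subset_Fm[THEN subsetD]

lemma conjl_Fm: "set As \<subseteq> Fm n \<Longrightarrow> conjl As \<in> Fm n"
  by (induction As) auto

lemma disjl_Fm: "set As \<subseteq> Fm n \<Longrightarrow> disjl As \<in> Fm n"
  by (induction As) auto

lemma conjl_IFm: "set As \<subseteq> IFm n \<Longrightarrow> conjl As \<in> IFm n"
  by (induction As) auto

lemma cls_mem: "A \<in> Fm n \<Longrightarrow> A \<in> cls n A"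
  by (simp add: cls_def ipc_equiv_refl)

lemma cls_eq_iff:
  assumes "A \<in> Fm n" "B \<in> Fm n"
  shows "cls n A = cls n B \<longleftrightarrow> ipc_equiv A B"
proof
  assume "cls n A = cls n B"
  then have "B \<in> cls n A" using assms(2) ipc_equiv_refl by (simp add: cls_def)
  then show "ipc_equiv A B" by (simp add: cls_def)
next
  assume "ipc_equiv A B"
  then show "cls n A = cls n B"
    unfolding cls_def using ipc_equiv_trans ipc_equiv_sym by blast
qed

lemma lind_le_cls_iff:
  assumes "A \<in> Fm n" "B \<in> Fm n"
  shows "lind_le (cls n A) (cls n B) \<longleftrightarrow> prv (Imp A B)"
proof
  assume "lind_le (cls n A) (cls n B)"
  then obtain A' B' where "ipc_equiv A A'" "ipc_equiv B B'" "prv (Imp A' B')"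
    by (auto simp: lind_le_def cls_def)
  then show "prv (Imp A B)" unfolding ipc_equiv_def using prv_trans by blast
next
  assume "prv (Imp A B)"
  then show "lind_le (cls n A) (cls n B)"
    unfolding lind_le_def using assms cls_mem by blast
qed

definition cls_filter :: "nat \<Rightarrow> (fm \<Rightarrow> bool) \<Rightarrow> fm set set" where
  "cls_filter n P = {cls n A | A. A \<in> Fm n \<and> P A}"

lemma cls_filter_mem:
  assumes "\<And>A B. A \<in> Fm n \<Longrightarrow> B \<in> Fm n \<Longrightarrow> P A \<Longrightarrow> prv (Imp A B) \<Longrightarrow> P B" and "A \<in> Fm n"
  shows "cls n A \<in> cls_filter n P \<longleftrightarrow> P A"
proof
  assume "cls n A \<in> cls_filter n P"
  then obtain B where "B \<in> Fm n" "P B" "cls n A = cls n B"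
    by (auto simp: cls_filter_def)
  then show "P A" using assms cls_eq_iff unfolding ipc_equiv_def by blast
qed (use assms(2) in \<open>auto simp: cls_filter_def\<close>)

lemma prime_filter_cls_filter:
  assumes up: "\<And>A B. A \<in> Fm n \<Longrightarrow> B \<in> Fm n \<Longrightarrow> P A \<Longrightarrow> prv (Imp A B) \<Longrightarrow> P B"
    and top: "P Top" and bot: "\<not> P Bot"
    and conj: "\<And>A B. A \<in> Fm n \<Longrightarrow> B \<in> Fm n \<Longrightarrow> P A \<Longrightarrow> P B \<Longrightarrow> P (And A B)"
    and prime: "\<And>A B. A \<in> Fm n \<Longrightarrow> B \<in> Fm n \<Longrightarrow> P (Or A B) \<Longrightarrow> P A \<or> P B"
  shows "prime_filter n (cls_filter n P)"
proof -
  have mem: "cls n A \<in> cls_filter n P \<longleftrightarrow> P A" if "A \<in> Fm n" for A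
    using cls_filter_mem[of n P A] up that by blast
  show ?thesis
    unfolding prime_filter_def
  proof (intro conjI ballI impI)
    show "cls_filter n P \<subseteq> lind n"
      by (auto simp: cls_filter_def lind_def)
    show "b \<in> cls_filter n P" if ab: "a \<in> cls_filter n P" "b \<in> lind n" "lind_le a b" for a b
    proof -
      obtain A B where A: "A \<in> Fm n" "P A" "a = cls n A" and B: "B \<in> Fm n" "b = cls n B"
        using ab(1,2) by (auto simp: cls_filter_def lind_def)
      then have "prv (Imp A B)" using ab(3) lind_le_cls_iff by blast
      then have "P B" using up A B by blast
      then show ?thesis using mem B by blast
    qed
    show "cls n Top \<in> cls_filter n P" using mem top by simp
    show "cls n Bot \<notin> cls_filter n P" using mem bot by simp
    show "cls n (And A B) \<in> cls_filter n P"
      if "A \<in> Fm n" "B \<in> Fm n" "cls n A \<in> cls_filter n P \<and> cls n B \<in> cls_filter n P" for A B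
      using that mem conj by simp
    show "cls n A \<in> cls_filter n P \<or> cls n B \<in> cls_filter n P"
      if "A \<in> Fm n" "B \<in> Fm n" "cls n (Or A B) \<in> cls_filter n P" for A B
      using that mem prime by simp
  qed
qed

context
  fixes n :: nat and x :: "fm set set"
  assumes pf: "prime_filter n x"
begin

lemma prime_filter_elem: "a \<in> x \<Longrightarrow> \<exists>A\<in>Fm n. a = cls n A"
  using pf unfolding prime_filter_def lind_def by blast

lemma prime_filter_upward:
  assumes "cls n A \<in> x" "A \<in> Fm n" "B \<in> Fm n" "prv (Imp A B)"
  shows "cls n B \<in> x"
proof -
  have "\<forall>a\<in>x. \<forall>b\<in>lind n. lind_le a b \<longrightarrow> b \<in> x"
    using pf by (simp add: prime_filter_def)
  moreover have "cls n B \<in> lind n" using assms(3) by (simp add: lind_def)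
  ultimately show ?thesis using assms lind_le_cls_iff by blast
qed

lemma prime_filter_Top: "cls n Top \<in> x"
  using pf by (simp add: prime_filter_def)

lemma prime_filter_Bot: "cls n Bot \<notin> x"
  using pf by (simp add: prime_filter_def)

lemma prime_filter_And:
  assumes "A \<in> Fm n" "B \<in> Fm n"
  shows "cls n (And A B) \<in> x \<longleftrightarrow> cls n A \<in> x \<and> cls n B \<in> x"
proof -
  have "cls n A \<in> x \<and> cls n B \<in> x \<Longrightarrow> cls n (And A B) \<in> x"
    using pf assms unfolding prime_filter_def by blast
  moreover have "cls n (And A B) \<in> x \<Longrightarrow> cls n A \<in> x" "cls n (And A B) \<in> x \<Longrightarrow> cls n B \<in> x"
    using prime_filter_upward[of "And A B"] assms ax_and1 ax_and2 by simp_all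
  ultimately show ?thesis by blast
qed

lemma prime_filter_Or:
  assumes "A \<in> Fm n" "B \<in> Fm n"
  shows "cls n (Or A B) \<in> x \<longleftrightarrow> cls n A \<in> x \<or> cls n B \<in> x"
proof -
  have "cls n (Or A B) \<in> x \<Longrightarrow> cls n A \<in> x \<or> cls n B \<in> x"
    using pf assms unfolding prime_filter_def by blast
  moreover have "cls n A \<in> x \<Longrightarrow> cls n (Or A B) \<in> x" "cls n B \<in> x \<Longrightarrow> cls n (Or A B) \<in> x"
    using prime_filter_upward[of _ "Or A B"] assms ax_or1 ax_or2 by simp_all
  ultimately show ?thesis by blast
qed

lemma prime_filter_mp:
  assumes "A \<in> Fm n" "B \<in> Fm n" "cls n (Imp A B) \<in> x" "cls n A \<in> x"
  shows "cls n B \<in> x"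
proof -
  have "prv (Imp (And (Imp A B) A) B)"
    by (meson ax_and1 ax_and2 prv_imp_mp)
  moreover have "cls n (And (Imp A B) A) \<in> x"
    using assms prime_filter_And by simp
  ultimately show ?thesis using assms prime_filter_upward[of "And (Imp A B) A" B] by simp
qed

lemma prime_filter_conjl:
  "set As \<subseteq> Fm n \<Longrightarrow> cls n (conjl As) \<in> x \<longleftrightarrow> (\<forall>A\<in>set As. cls n A \<in> x)"
  by (induction As) (auto simp: prime_filter_Top prime_filter_And conjl_Fm)

lemma prime_filter_disjl:
  "set As \<subseteq> Fm n \<Longrightarrow> cls n (disjl As) \<in> x \<longleftrightarrow> (\<exists>A\<in>set As. cls n A \<in> x)"
  by (induction As) (auto simp: prime_filter_Bot prime_filter_Or disjl_Fm)

lemma prime_filter_eqI: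
  assumes "prime_filter n y" and "\<And>A. A \<in> Fm n \<Longrightarrow> cls n A \<in> x \<longleftrightarrow> cls n A \<in> y"
  shows "x = y"
proof -
  have "x \<subseteq> lind n" "y \<subseteq> lind n"
    using pf assms(1) by (simp_all add: prime_filter_def)
  then show ?thesis
    using assms(2) unfolding lind_def by blast
qed

end

lemma ex_conj_formula:
  assumes "finite S" "S \<subseteq> IFm n"
  obtains C where "C \<in> IFm n" "\<And>x. prime_filter n x \<Longrightarrow> cls n C \<in> x \<longleftrightarrow> (\<forall>A\<in>S. cls n A \<in> x)"
proof -
  obtain As where As: "set As = S" using finite_list[OF assms(1)] by blast
  show thesis
  proof (rule that)
    show "conjl As \<in> IFm n" using As assms(2) by (simp add: conjl_IFm)
    show "cls n (conjl As) \<in> x \<longleftrightarrow> (\<forall>A\<in>S. cls n A \<in> x)" if "prime_filter n x" for x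
      using prime_filter_conjl[OF that] As assms(2) IFm_subset_Fm by blast
  qed
qed

section \<open>Lindenbaum's lemma\<close>

definition prime_theory :: "nat \<Rightarrow> fm set \<Rightarrow> bool" where
  "prime_theory n M \<longleftrightarrow> M \<subseteq> Fm n \<and> Bot \<notin> M \<and> (\<forall>C\<in>Fm n. derives M C \<longrightarrow> C \<in> M)
     \<and> (\<forall>C D. Or C D \<in> M \<longrightarrow> C \<in> M \<or> D \<in> M)"

lemma prime_filter_prime_theory:
  assumes "prime_theory n M"
  shows "prime_filter n (cls_filter n (\<lambda>C. C \<in> M))"
    and "C \<in> Fm n \<Longrightarrow> cls n C \<in> cls_filter n (\<lambda>C. C \<in> M) \<longleftrightarrow> C \<in> M"
proof -
  have closed: "\<And>C. C \<in> Fm n \<Longrightarrow> derives M C \<Longrightarrow> C \<in> M"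
    using assms by (simp add: prime_theory_def)
  have up: "\<And>A B. A \<in> Fm n \<Longrightarrow> B \<in> Fm n \<Longrightarrow> A \<in> M \<Longrightarrow> prv (Imp A B) \<Longrightarrow> B \<in> M"
    using closed derives_mem derives_prv_mp by blast
  show "prime_filter n (cls_filter n (\<lambda>C. C \<in> M))"
  proof (rule prime_filter_cls_filter)
    show "B \<in> M" if "A \<in> Fm n" "B \<in> Fm n" "A \<in> M" "prv (Imp A B)" for A B
      using that up by blast
    show "Top \<in> M" using closed by (simp add: ax_top derives_prv)
    show "Bot \<notin> M" using assms by (simp add: prime_theory_def)
    show "And A B \<in> M" if "A \<in> Fm n" "B \<in> Fm n" "A \<in> M" "B \<in> M" for A B
      using that closed derives_andI derives_mem by simp
    show "A \<in> M \<or> B \<in> M" if "Or A B \<in> M" for A B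
      using that assms by (simp add: prime_theory_def)
  qed
  show "C \<in> Fm n \<Longrightarrow> cls n C \<in> cls_filter n (\<lambda>C. C \<in> M) \<longleftrightarrow> C \<in> M"
    using cls_filter_mem[of n "\<lambda>C. C \<in> M" C] up by blast
qed

lemma prime_theory_extension:
  assumes \<Gamma>: "\<Gamma> \<subseteq> Fm n" and "\<not> derives \<Gamma> B"
  obtains M where "prime_theory n M" "\<Gamma> \<subseteq> M" "\<not> derives M B"
proof -
  define F where "F = {D. \<Gamma> \<subseteq> D \<and> D \<subseteq> Fm n \<and> \<not> derives D B}"
  have "\<exists>M\<in>F. \<forall>X\<in>F. M \<subseteq> X \<longrightarrow> X = M"
  proof (rule subset_Zorn_nonempty)
    show "F \<noteq> {}" using assms by (auto simp: F_def)
  next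
    fix \<C> assume \<C>: "\<C> \<noteq> {}" "subset.chain F \<C>"
    then have sub: "\<C> \<subseteq> F" and chain: "\<And>X Y. X \<in> \<C> \<Longrightarrow> Y \<in> \<C> \<Longrightarrow> X \<subseteq> Y \<or> Y \<subseteq> X"
      by (auto simp: subset_chain_def)
    have "\<not> derives (\<Union>\<C>) B"
      using derives_chain_Union[OF \<C>(1) chain] sub by (auto simp: F_def)
    moreover have "\<Gamma> \<subseteq> \<Union>\<C>" "\<Union>\<C> \<subseteq> Fm n"
      using \<C>(1) sub by (auto simp: F_def)
    ultimately show "\<Union>\<C> \<in> F" by (simp add: F_def)
  qed
  then obtain M where "M \<in> F" and max: "\<And>X. X \<in> F \<Longrightarrow> M \<subseteq> X \<Longrightarrow> X = M"
    by blast
  then have M: "\<Gamma> \<subseteq> M" "M \<subseteq> Fm n" "\<not> derives M B" by (auto simp: F_def)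
  have add: "derives (insert C M) B" if "C \<in> Fm n" "C \<notin> M" for C
  proof (rule ccontr)
    assume "\<not> derives (insert C M) B"
    then have "insert C M \<in> F" using M that(1) by (auto simp: F_def)
    then show False using max[of "insert C M"] that(2) by blast
  qed
  have "prime_theory n M"
    unfolding prime_theory_def
  proof (intro conjI ballI allI impI)
    show "M \<subseteq> Fm n" by (fact M(2))
    show "Bot \<notin> M" using M(3) ax_bot derives_mem derives_prv_mp by blast
    show "C \<in> M" if "C \<in> Fm n" "derives M C" for C
    proof (rule ccontr)
      assume "C \<notin> M"
      have "\<And>D. D \<in> insert C M \<Longrightarrow> derives M D" using that(2) derives_mem by blast
      then have "derives M B" using add[OF that(1) \<open>C \<notin> M\<close>] derives_cut by blast
      then show False using M(3) by blast
    qed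
    show "C \<in> M \<or> D \<in> M" if "Or C D \<in> M" for C D
    proof (rule ccontr)
      assume "\<not> (C \<in> M \<or> D \<in> M)"
      moreover have "C \<in> Fm n" "D \<in> Fm n" using that M(2) by auto
      ultimately have "derives (insert C M) B" "derives (insert D M) B" using add by auto
      then show False using derives_orE derives_mem[OF that] M(3) by blast
    qed
  qed
  then show thesis using that M by blast
qed

lemma lindenbaum:
  assumes x: "prime_filter n x" and A: "A \<in> Fm n" and B: "B \<in> Fm n"
    and "cls n (Imp A B) \<notin> x"
  obtains y where "prime_filter n y" "x \<subseteq> y" "cls n A \<in> y" "cls n B \<notin> y"
proof -
  define \<Gamma> where "\<Gamma> = {C \<in> Fm n. cls n C \<in> x}"
  have "\<not> derives \<Gamma> (Imp A B)"
  proof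
    assume "derives \<Gamma> (Imp A B)"
    then obtain Ds where Ds: "set Ds \<subseteq> \<Gamma>" "prv (Imp (conjl Ds) (Imp A B))"
      unfolding derives_def by blast
    have "set Ds \<subseteq> Fm n" using Ds(1) by (auto simp: \<Gamma>_def)
    moreover have "cls n (conjl Ds) \<in> x"
      using Ds(1) prime_filter_conjl[OF x \<open>set Ds \<subseteq> Fm n\<close>] by (auto simp: \<Gamma>_def)
    ultimately have "cls n (Imp A B) \<in> x"
      using prime_filter_upward[OF x] Ds(2) A B conjl_Fm by simp
    then show False using assms(4) by blast
  qed
  then have "\<not> derives (insert A \<Gamma>) B" using derives_deduct by blast
  moreover have "insert A \<Gamma> \<subseteq> Fm n" using A by (auto simp: \<Gamma>_def)
  ultimately obtain M where M: "prime_theory n M" "insert A \<Gamma> \<subseteq> M" "\<not> derives M B"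
    using prime_theory_extension by blast
  note y = prime_filter_prime_theory[OF M(1)]
  have "x \<subseteq> cls_filter n (\<lambda>C. C \<in> M)"
    using prime_filter_elem[OF x] M(2) y(2) unfolding \<Gamma>_def by blast
  moreover have "cls n A \<in> cls_filter n (\<lambda>C. C \<in> M)" "cls n B \<notin> cls_filter n (\<lambda>C. C \<in> M)"
    using y(2) A B M(2,3) derives_mem by auto
  ultimately show thesis using that y(1) by blast
qed

lemma prime_filter_Imp_iff:
  assumes "prime_filter n x" "A \<in> Fm n" "B \<in> Fm n"
  shows "cls n (Imp A B) \<in> x \<longleftrightarrow> (\<forall>y. prime_filter n y \<and> x \<subseteq> y \<and> cls n A \<in> y \<longrightarrow> cls n B \<in> y)"
proof
  assume "cls n (Imp A B) \<in> x"
  then show "\<forall>y. prime_filter n y \<and> x \<subseteq> y \<and> cls n A \<in> y \<longrightarrow> cls n B \<in> y"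
    using prime_filter_mp assms(2,3) by blast
next
  assume "\<forall>y. prime_filter n y \<and> x \<subseteq> y \<and> cls n A \<in> y \<longrightarrow> cls n B \<in> y"
  then show "cls n (Imp A B) \<in> x"
    using lindenbaum[OF assms] by blast
qed

section \<open>Kripke semantics and the theory map\<close>

fun sat :: "'a set set \<Rightarrow> ('a set \<Rightarrow> nat \<Rightarrow> bool) \<Rightarrow> 'a set \<Rightarrow> fm \<Rightarrow> bool" where
  "sat W c w (Var i) = c w i"
| "sat W c w Top = True"
| "sat W c w Bot = False"
| "sat W c w (And A B) = (sat W c w A \<and> sat W c w B)"
| "sat W c w (Or A B) = (sat W c w A \<or> sat W c w B)"
| "sat W c w (Imp A B) = (\<forall>v\<in>W. w \<subseteq> v \<longrightarrow> sat W c v A \<longrightarrow> sat W c v B)"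

definition mono_col :: "'a set set \<Rightarrow> ('a set \<Rightarrow> nat \<Rightarrow> bool) \<Rightarrow> bool" where
  "mono_col W c \<longleftrightarrow> (\<forall>w\<in>W. \<forall>v\<in>W. \<forall>i. w \<subseteq> v \<longrightarrow> c w i \<longrightarrow> c v i)"

lemma sat_disjl: "sat W c w (disjl As) \<longleftrightarrow> (\<exists>A\<in>set As. sat W c w A)"
  by (induction As) auto

lemma sat_persistent:
  assumes "mono_col W c"
  shows "w \<in> W \<Longrightarrow> v \<in> W \<Longrightarrow> w \<subseteq> v \<Longrightarrow> sat W c w A \<Longrightarrow> sat W c v A"
proof (induction A arbitrary: w v)
  case (Var i) then show ?case using assms by (auto simp: mono_col_def)
next
  case (Imp A B) then show ?case by auto
qed auto

lemma sat_sound: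
  assumes mc: "mono_col W c"
  shows "prv A \<Longrightarrow> w \<in> W \<Longrightarrow> sat W c w A"
proof (induction A arbitrary: w rule: prv.induct)
  case (ax_k A B) then show ?case using sat_persistent[OF mc] by auto
next
  case (ax_s A B C)
  show ?case unfolding sat.simps
  proof (intro ballI impI)
    fix v u t
    assume "v \<in> W" "w \<subseteq> v"
      "\<forall>v'\<in>W. v \<subseteq> v' \<longrightarrow> sat W c v' A \<longrightarrow> (\<forall>v''\<in>W. v' \<subseteq> v'' \<longrightarrow> sat W c v'' B \<longrightarrow> sat W c v'' C)"
      "u \<in> W" "v \<subseteq> u" "\<forall>v'\<in>W. u \<subseteq> v' \<longrightarrow> sat W c v' A \<longrightarrow> sat W c v' B"
      "t \<in> W" "u \<subseteq> t" "sat W c t A"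
    then show "sat W c t C" by blast
  qed
next
  case (ax_andI A B) then show ?case using sat_persistent[OF mc] by auto
qed auto

definition theory_map :: "nat \<Rightarrow> 'a set set \<Rightarrow> ('a set \<Rightarrow> nat \<Rightarrow> bool) \<Rightarrow> 'a set \<Rightarrow> fm set set" where
  "theory_map n W c w = cls_filter n (sat W c w)"

context
  fixes n :: nat and W :: "'a set set" and c :: "'a set \<Rightarrow> nat \<Rightarrow> bool"
  assumes mc: "mono_col W c"
begin

lemma sat_prv_mp: "w \<in> W \<Longrightarrow> prv (Imp A B) \<Longrightarrow> sat W c w A \<Longrightarrow> sat W c w B"
  using sat_sound[OF mc, of "Imp A B" w] by auto

lemma theory_map_mem: "A \<in> Fm n \<Longrightarrow> w \<in> W \<Longrightarrow> cls n A \<in> theory_map n W c w \<longleftrightarrow> sat W c w A"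
  unfolding theory_map_def
  by (rule cls_filter_mem) (use sat_prv_mp in blast)

lemma prime_filter_theory_map: "w \<in> W \<Longrightarrow> prime_filter n (theory_map n W c w)"
  unfolding theory_map_def
  by (rule prime_filter_cls_filter) (use sat_prv_mp in auto)

lemma theory_map_mono: "w \<in> W \<Longrightarrow> v \<in> W \<Longrightarrow> w \<subseteq> v \<Longrightarrow> theory_map n W c w \<subseteq> theory_map n W c v"
  unfolding theory_map_def cls_filter_def using sat_persistent[OF mc] by blast

lemma canon_col_theory_map: "i < n \<Longrightarrow> w \<in> W \<Longrightarrow> canon_col n (theory_map n W c w) i \<longleftrightarrow> c w i"
  unfolding canon_col_def using theory_map_mem[of "Var i" w] by simp

text \<open>A prime filter above the theory of v but above no theory of a strict successor of v
  is the theory of v: otherwise the disjunction of finitely many witnesses, one for each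
  strict successor, refutes it together with a formula false at v.\<close>

lemma theory_map_eq_if_maximal:
  assumes v: "v \<in> W" and fin: "finite {u\<in>W. v \<subset> u}"
    and z: "prime_filter n z" and below: "theory_map n W c v \<subseteq> z"
    and max: "\<And>u. u \<in> W \<Longrightarrow> v \<subset> u \<Longrightarrow> \<not> theory_map n W c u \<subseteq> z"
  shows "z = theory_map n W c v"
proof
  show "z \<subseteq> theory_map n W c v"
  proof
    fix a assume "a \<in> z"
    then obtain A where A: "A \<in> Fm n" "a = cls n A" "cls n A \<in> z"
      using prime_filter_elem[OF z] by blast
    show "a \<in> theory_map n W c v"
    proof (rule ccontr)
      assume "a \<notin> theory_map n W c v"
      then have nA: "\<not> sat W c v A" using A theory_map_mem v by simp
      define U where "U = {u\<in>W. v \<subset> u}"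
      have "\<forall>u\<in>U. \<exists>B. B \<in> Fm n \<and> sat W c u B \<and> cls n B \<notin> z"
      proof
        fix u assume "u \<in> U"
        then obtain b where "b \<in> theory_map n W c u" "b \<notin> z"
          using max by (auto simp: U_def)
        then show "\<exists>B. B \<in> Fm n \<and> sat W c u B \<and> cls n B \<notin> z"
          by (auto simp: theory_map_def cls_filter_def)
      qed
      then obtain f where f: "\<forall>u\<in>U. f u \<in> Fm n \<and> sat W c u (f u) \<and> cls n (f u) \<notin> z"
        by metis
      obtain us where us: "set us = U" using finite_list fin unfolding U_def by blast
      define D where "D = disjl (map f us)"
      have DF: "set (map f us) \<subseteq> Fm n" using f us by auto
      then have "D \<in> Fm n" by (simp add: D_def disjl_Fm)
      have "sat W c v (Imp A D)"
        unfolding sat.simps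
      proof (intro ballI impI)
        fix u assume u: "u \<in> W" "v \<subseteq> u" "sat W c u A"
        then have "u \<in> U" using nA by (auto simp: U_def)
        then show "sat W c u D" using f us by (auto simp: D_def sat_disjl)
      qed
      then have "cls n (Imp A D) \<in> z" using theory_map_mem v A(1) \<open>D \<in> Fm n\<close> below by auto
      then have "cls n D \<in> z" using prime_filter_mp[OF z A(1) \<open>D \<in> Fm n\<close>] A(3) by blast
      then show False using prime_filter_disjl[OF z DF(1)] f us by (auto simp: D_def)
    qed
  qed
qed (fact below)

lemma theory_map_back:
  assumes w: "w \<in> W" and fin: "\<And>u. u \<in> W \<Longrightarrow> finite {v\<in>W. u \<subseteq> v}"
    and z: "prime_filter n z" and below: "theory_map n W c w \<subseteq> z"
  shows "\<exists>v\<in>W. w \<subseteq> v \<and> z = theory_map n W c v"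
proof -
  define T where "T = {v\<in>W. w \<subseteq> v \<and> theory_map n W c v \<subseteq> z}"
  have "finite T" using fin[OF w] by (rule rev_finite_subset) (auto simp: T_def)
  moreover have "w \<in> T" using w below by (simp add: T_def)
  ultimately obtain v where v: "v \<in> T" and vmax: "\<And>u. u \<in> T \<Longrightarrow> v \<subseteq> u \<Longrightarrow> u = v"
    using finite_has_maximal[of T] by blast
  then have vW: "v \<in> W" "w \<subseteq> v" "theory_map n W c v \<subseteq> z" by (auto simp: T_def)
  have "finite {u\<in>W. v \<subset> u}"
    using fin[OF vW(1)] by (rule rev_finite_subset) auto
  moreover have "\<not> theory_map n W c u \<subseteq> z" if "u \<in> W" "v \<subset> u" for u
    using vmax[of u] that vW(2) by (auto simp: T_def)
  ultimately have "z = theory_map n W c v"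
    using theory_map_eq_if_maximal[OF vW(1) _ z vW(3)] by blast
  then show ?thesis using vW by blast
qed

lemma theory_map_univ_model:
  assumes w: "w \<in> W" and fin: "\<And>u. u \<in> W \<Longrightarrow> finite {v\<in>W. u \<subseteq> v}"
  shows "theory_map n W c w \<in> univ_model n"
proof -
  have "{y. prime_filter n y \<and> theory_map n W c w \<subseteq> y} \<subseteq> theory_map n W c ` {v\<in>W. w \<subseteq> v}"
    using theory_map_back[OF w fin] by blast
  then have "finite {y. prime_filter n y \<and> theory_map n W c w \<subseteq> y}"
    using fin[OF w] finite_subset by blast
  then show ?thesis using prime_filter_theory_map[OF w] by (simp add: univ_model_def)
qed

end

section \<open>The universal model and its separated points\<close>

abbreviation univ_sep :: "nat \<Rightarrow> fm set set set" where
  "univ_sep n \<equiv> separated_points n (univ_model n) (\<subseteq>) (canon_col n)"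

lemma univ_model_prime_filter: "x \<in> univ_model n \<Longrightarrow> prime_filter n x"
  by (simp add: univ_model_def)

lemma univ_model_upward: "x \<in> univ_model n \<Longrightarrow> prime_filter n y \<Longrightarrow> x \<subseteq> y \<Longrightarrow> y \<in> univ_model n"
  unfolding univ_model_def
  by (auto elim!: rev_finite_subset)

lemma finite_univ_model_above: "x \<in> univ_model n \<Longrightarrow> finite {y\<in>univ_model n. x \<subseteq> y}"
  unfolding univ_model_def
  by (auto elim!: rev_finite_subset)

lemma univ_model_Imp_iff:
  assumes x: "x \<in> univ_model n" and "A \<in> Fm n" "B \<in> Fm n"
  shows "cls n (Imp A B) \<in> x \<longleftrightarrow> (\<forall>y\<in>univ_model n. x \<subseteq> y \<and> cls n A \<in> y \<longrightarrow> cls n B \<in> y)"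
  using prime_filter_Imp_iff[OF univ_model_prime_filter[OF x] assms(2,3)]
    univ_model_upward[OF x] univ_model_prime_filter
  by blast

lemma mono_col_canon_col: "mono_col W (canon_col n)"
  by (auto simp: mono_col_def canon_col_def)

lemma univ_sep_subset: "univ_sep n \<subseteq> univ_model n"
  by (auto simp: separated_points_def)

lemma univ_sep_prime_filter: "s \<in> univ_sep n \<Longrightarrow> prime_filter n s"
  using univ_sep_subset univ_model_prime_filter by blast

lemma finite_univ_sep_above:
  assumes "s \<in> univ_sep n"
  shows "finite {v\<in>univ_sep n. s \<subseteq> v}"
proof -
  have "finite {v\<in>univ_model n. s \<subseteq> v}"
    using assms finite_univ_model_above univ_sep_subset by blast
  then show ?thesis by (rule rev_finite_subset) (use univ_sep_subset in blast)
qed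

lemma p_morphism_theory_map_univ_sep:
  "p_morphism n (univ_sep n) (\<subseteq>) (canon_col n) (univ_model n) (\<subseteq>) (canon_col n)
     (theory_map n (univ_sep n) (canon_col n))"
  unfolding p_morphism_def
proof (intro conjI ballI impI allI)
  fix x assume x: "x \<in> univ_sep n"
  show "theory_map n (univ_sep n) (canon_col n) x \<in> univ_model n"
    using theory_map_univ_model[OF mono_col_canon_col x finite_univ_sep_above] .
  show "\<exists>y\<in>univ_sep n. x \<subseteq> y \<and> theory_map n (univ_sep n) (canon_col n) y = z"
    if "z \<in> univ_model n" "theory_map n (univ_sep n) (canon_col n) x \<subseteq> z" for z
    using theory_map_back[OF mono_col_canon_col x finite_univ_sep_above
        univ_model_prime_filter[OF that(1)] that(2)]
    by metis
  show "canon_col n (theory_map n (univ_sep n) (canon_col n) x) i = canon_col n x i" if "i < n" for i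
    using canon_col_theory_map[OF mono_col_canon_col that x] by simp
next
  fix x y assume "x \<in> univ_sep n" "y \<in> univ_sep n" "x \<subseteq> y"
  then show "theory_map n (univ_sep n) (canon_col n) x \<subseteq> theory_map n (univ_sep n) (canon_col n) y"
    using theory_map_mono[OF mono_col_canon_col] by blast
qed

lemma
  assumes "p_morphism n M leM cM N leN cN f" and "x \<in> M"
  shows p_morphism_into: "f x \<in> N"
    and p_morphism_back: "z \<in> N \<Longrightarrow> leN (f x) z \<Longrightarrow> \<exists>y\<in>M. leM x y \<and> f y = z"
    and p_morphism_col: "i < n \<Longrightarrow> cN (f x) i = cM x i"
  using assms unfolding p_morphism_def by auto

lemma univ_ci_iff: "x \<in> univ_ci n \<longleftrightarrow>
   (\<exists>f. p_morphism n (univ_sep n) (\<subseteq>) (canon_col n) (univ_model n) (\<subseteq>) (canon_col n) f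
        \<and> x \<in> f ` univ_sep n)"
  unfolding univ_ci_def by blast

lemma theory_map_univ_sep_in_univ_ci:
  "s \<in> univ_sep n \<Longrightarrow> theory_map n (univ_sep n) (canon_col n) s \<in> univ_ci n"
  using p_morphism_theory_map_univ_sep univ_ci_iff by blast

lemma univ_ci_subset: "univ_ci n \<subseteq> univ_model n"
proof
  fix x assume "x \<in> univ_ci n"
  then obtain f s where f: "p_morphism n (univ_sep n) (\<subseteq>) (canon_col n) (univ_model n) (\<subseteq>) (canon_col n) f"
    and s: "s \<in> univ_sep n" "x = f s"
    unfolding univ_ci_iff by blast
  then show "x \<in> univ_model n" using p_morphism_into[OF f s(1)] by simp
qed

lemmas univ_ci_univ_model = univ_ci_subset[THEN subsetD]

lemma univ_ci_prime_filter: "x \<in> univ_ci n \<Longrightarrow> prime_filter n x"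
  by (simp add: univ_ci_univ_model univ_model_prime_filter)

lemma univ_ci_upward:
  assumes "x \<in> univ_ci n" "y \<in> univ_model n" "x \<subseteq> y"
  shows "y \<in> univ_ci n"
proof -
  obtain f s where f: "p_morphism n (univ_sep n) (\<subseteq>) (canon_col n) (univ_model n) (\<subseteq>) (canon_col n) f"
    and s: "s \<in> univ_sep n" "x = f s"
    using assms(1) unfolding univ_ci_iff by blast
  then obtain t where "t \<in> univ_sep n" "f t = y"
    using p_morphism_back[OF f s(1) assms(2)] assms(3) by blast
  then show ?thesis using f univ_ci_iff by blast
qed

text \<open>p-morphisms preserve colours and are onto strict up-sets, so separation of a point
  of the domain is inherited by its image.\<close>

lemma univ_ci_separated:
  assumes "x \<in> univ_ci n"
  shows "\<exists>q<n. cls n (Var q) \<notin> x \<and> (\<forall>y\<in>univ_model n. x \<subset> y \<longrightarrow> cls n (Var q) \<in> y)"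
proof -
  obtain f s where f: "p_morphism n (univ_sep n) (\<subseteq>) (canon_col n) (univ_model n) (\<subseteq>) (canon_col n) f"
    and s: "s \<in> univ_sep n" "x = f s"
    using assms unfolding univ_ci_iff by blast
  obtain q where q: "q < n" "\<not> canon_col n s q"
    and above: "\<forall>y\<in>univ_model n. s \<subseteq> y \<and> s \<noteq> y \<longrightarrow> canon_col n y q"
    using s(1) unfolding separated_points_def by blast
  have col: "\<And>t. t \<in> univ_sep n \<Longrightarrow> canon_col n (f t) q = canon_col n t q"
    using p_morphism_col[OF f _ q(1)] by blast
  have "cls n (Var q) \<in> y" if y: "y \<in> univ_model n" "x \<subset> y" for y
  proof -
    obtain t where t: "t \<in> univ_sep n" "s \<subseteq> t" "f t = y"
      using p_morphism_back[OF f s(1) y(1)] y(2) s(2) by blast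
    then have "canon_col n t q" using above y s univ_sep_subset by blast
    then show ?thesis using col[OF t(1)] t(3) by (simp add: canon_col_def)
  qed
  moreover have "cls n (Var q) \<notin> x" using col s q(2) by (simp add: canon_col_def)
  ultimately show ?thesis using q(1) by blast
qed

lemma univ_ci_Imp_iff:
  assumes x: "x \<in> univ_ci n" and "A \<in> Fm n" "B \<in> Fm n"
  shows "cls n (Imp A B) \<in> x \<longleftrightarrow> (\<forall>y\<in>univ_ci n. x \<subseteq> y \<and> cls n A \<in> y \<longrightarrow> cls n B \<in> y)"
  using univ_model_Imp_iff[OF univ_ci_univ_model[OF x] assms(2,3)]
    univ_ci_upward[OF x] univ_ci_univ_model
  by blast

text \<open>For a variable, a maximal point above y refuting it is separated by that variable.\<close>

lemma separated_point_refuting: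
  "y \<in> univ_model n \<Longrightarrow> D \<in> IFm n \<Longrightarrow> cls n D \<notin> y \<Longrightarrow> \<exists>t\<in>univ_sep n. y \<subseteq> t \<and> cls n D \<notin> t"
proof (induction D arbitrary: y)
  case (Var q)
  define T where "T = {t\<in>univ_model n. y \<subseteq> t \<and> cls n (Var q) \<notin> t}"
  have "finite T" using finite_univ_model_above[OF Var.prems(1)]
    by (rule rev_finite_subset) (auto simp: T_def)
  moreover have "y \<in> T" using Var.prems by (simp add: T_def)
  ultimately obtain t where t: "t \<in> T" and tmax: "\<And>u. u \<in> T \<Longrightarrow> t \<subseteq> u \<Longrightarrow> u = t"
    using finite_has_maximal[of T] by blast
  have "t \<in> univ_sep n"
    unfolding separated_points_def
  proof (intro CollectI conjI exI[of _ q] ballI impI)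
    show "t \<in> univ_model n" "q < n" "\<not> canon_col n t q"
      using t Var.prems(2) by (auto simp: T_def canon_col_def)
    show "canon_col n u q" if "u \<in> univ_model n" "t \<subseteq> u \<and> t \<noteq> u" for u
      using tmax[of u] that t by (auto simp: T_def canon_col_def)
  qed
  then show ?case using t by (auto simp: T_def)
next
  case Top
  then show ?case using prime_filter_Top[OF univ_model_prime_filter] by blast
next
  case (And A B)
  have AB: "A \<in> Fm n" "B \<in> Fm n" using And.prems(2) IFm_Fm by auto
  have "cls n A \<notin> y \<or> cls n B \<notin> y"
    using prime_filter_And[OF univ_model_prime_filter[OF And.prems(1)] AB] And.prems(3) by blast
  moreover have "cls n (And A B) \<notin> t" if "t \<in> univ_sep n" "cls n A \<notin> t \<or> cls n B \<notin> t" for t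
    using prime_filter_And[OF univ_model_prime_filter AB] that univ_sep_subset by blast
  ultimately show ?case using And.IH And.prems by (metis IFm_simps(4))
next
  case (Imp E F)
  have EF: "E \<in> Fm n" "F \<in> Fm n" "F \<in> IFm n" using Imp.prems(2) IFm_Fm by auto
  obtain z where z: "z \<in> univ_model n" "y \<subseteq> z" "cls n E \<in> z" "cls n F \<notin> z"
    using univ_model_Imp_iff[OF Imp.prems(1) EF(1,2)] Imp.prems(3) by blast
  obtain t where t: "t \<in> univ_sep n" "z \<subseteq> t" "cls n F \<notin> t"
    using Imp.IH(2)[OF z(1) EF(3) z(4)] by blast
  have "cls n (Imp E F) \<notin> t"
    using prime_filter_mp[OF univ_model_prime_filter EF(1,2)] t z univ_sep_subset by blast
  then show ?case using t z by blast
qed auto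

lemma sat_univ_sep_iff:
  "s \<in> univ_sep n \<Longrightarrow> A \<in> IFm n \<Longrightarrow> sat (univ_sep n) (canon_col n) s A \<longleftrightarrow> cls n A \<in> s"
proof (induction A arbitrary: s)
  case (Var i) then show ?case by (simp add: canon_col_def)
next
  case Top then show ?case using prime_filter_Top[OF univ_sep_prime_filter] by simp
next
  case (And A B)
  then show ?case using prime_filter_And[OF univ_sep_prime_filter[OF And.prems(1)]] IFm_Fm by auto
next
  case (Imp C D)
  have CD: "C \<in> Fm n" "D \<in> Fm n" "C \<in> IFm n" "D \<in> IFm n" using Imp.prems(2) IFm_Fm by auto
  have s: "s \<in> univ_model n" using Imp.prems(1) univ_sep_subset by blast
  show ?case
  proof
    assume sat: "sat (univ_sep n) (canon_col n) s (Imp C D)"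
    show "cls n (Imp C D) \<in> s"
    proof (rule ccontr)
      assume "cls n (Imp C D) \<notin> s"
      then obtain z where z: "z \<in> univ_model n" "s \<subseteq> z" "cls n C \<in> z" "cls n D \<notin> z"
        using univ_model_Imp_iff[OF s CD(1,2)] by blast
      obtain t where t: "t \<in> univ_sep n" "z \<subseteq> t" "cls n D \<notin> t"
        using separated_point_refuting[OF z(1) CD(4) z(4)] by blast
      have "sat (univ_sep n) (canon_col n) t C" using Imp.IH(1)[OF t(1) CD(3)] t z by blast
      moreover have "s \<subseteq> t" using t(2) z(2) by blast
      ultimately have "sat (univ_sep n) (canon_col n) t D" using sat t(1) by simp
      then show False using Imp.IH(2)[OF t(1) CD(4)] t by blast
    qed
  next
    assume CD_s: "cls n (Imp C D) \<in> s"
    show "sat (univ_sep n) (canon_col n) s (Imp C D)"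
      unfolding sat.simps
    proof (intro ballI impI)
      fix v assume v: "v \<in> univ_sep n" "s \<subseteq> v" "sat (univ_sep n) (canon_col n) v C"
      then have "cls n C \<in> v" "cls n (Imp C D) \<in> v" using Imp.IH(1)[OF v(1) CD(3)] CD_s by auto
      then have "cls n D \<in> v" using prime_filter_mp[OF univ_sep_prime_filter[OF v(1)] CD(1,2)] by blast
      then show "sat (univ_sep n) (canon_col n) v D" using Imp.IH(2)[OF v(1) CD(4)] by blast
    qed
  qed
qed auto

lemma theory_map_univ_sep_mem:
  "s \<in> univ_sep n \<Longrightarrow> A \<in> IFm n \<Longrightarrow> cls n A \<in> theory_map n (univ_sep n) (canon_col n) s \<longleftrightarrow> cls n A \<in> s"
  using theory_map_mem[OF mono_col_canon_col IFm_Fm] sat_univ_sep_iff by blast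

section \<open>Finite countermodels\<close>

fun subf :: "fm \<Rightarrow> fm set" where
  "subf (Var i) = {Var i}"
| "subf Top = {Top}"
| "subf Bot = {Bot}"
| "subf (And A B) = insert (And A B) (subf A \<union> subf B)"
| "subf (Or A B) = insert (Or A B) (subf A \<union> subf B)"
| "subf (Imp A B) = insert (Imp A B) (subf A \<union> subf B)"

lemma finite_subf: "finite (subf A)"
  by (induction A) auto

lemma subf_self: "A \<in> subf A"
  by (cases A) auto

lemma subf_trans: "B \<in> subf A \<Longrightarrow> subf B \<subseteq> subf A"
  by (induction A) auto

lemma subf_IFm: "A \<in> IFm n \<Longrightarrow> B \<in> subf A \<Longrightarrow> B \<in> IFm n"
  by (induction A) auto

text \<open>Worlds of the finite canonical model over a subformula-closed set S.\<close>

definition closed_theories :: "fm set \<Rightarrow> fm set set" where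
  "closed_theories S = {G. G \<subseteq> S \<and> (\<forall>C\<in>S. derives G C \<longrightarrow> C \<in> G)}"

lemma consequences_closed_theories: "{C\<in>S. derives \<Gamma> C} \<in> closed_theories S"
  unfolding closed_theories_def using derives_cut[of "{C\<in>S. derives \<Gamma> C}" \<Gamma>] by auto

lemma sat_closed_theories_iff:
  assumes sub: "\<And>C D. And C D \<in> S \<Longrightarrow> C \<in> S \<and> D \<in> S" "\<And>C D. Imp C D \<in> S \<Longrightarrow> C \<in> S \<and> D \<in> S"
    and ci: "\<And>C. C \<in> S \<Longrightarrow> conj_imp C"
  shows "G \<in> closed_theories S \<Longrightarrow> C \<in> S \<Longrightarrow> sat (closed_theories S) (\<lambda>G i. Var i \<in> G) G C \<longleftrightarrow> C \<in> G"
proof (induction C arbitrary: G)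
  case Top then show ?case by (simp add: closed_theories_def ax_top derives_prv)
next
  case Bot then show ?case using ci by force
next
  case (Or C D) then show ?case using ci by force
next
  case (And C D)
  have CD: "C \<in> S" "D \<in> S" using sub(1) And.prems(2) by blast+
  have closed: "\<And>E. E \<in> S \<Longrightarrow> derives G E \<Longrightarrow> E \<in> G"
    using And.prems(1) by (simp add: closed_theories_def)
  have "And C D \<in> G \<longleftrightarrow> C \<in> G \<and> D \<in> G"
  proof
    assume "And C D \<in> G"
    then have "derives G C" "derives G D"
      using derives_prv_mp[OF ax_and1] derives_prv_mp[OF ax_and2] derives_mem by blast+
    then show "C \<in> G \<and> D \<in> G" using closed CD by blast
  next
    assume "C \<in> G \<and> D \<in> G"
    then have "derives G (And C D)" using derives_mem derives_andI by blast
    then show "And C D \<in> G" using closed And.prems(2) by blast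
  qed
  moreover have "sat (closed_theories S) (\<lambda>G i. Var i \<in> G) G E \<longleftrightarrow> E \<in> G" if "E \<in> {C, D}" for E
    using that And.IH And.prems(1) CD by auto
  ultimately show ?case by simp
next
  case (Imp C D)
  have CD: "C \<in> S" "D \<in> S" using sub(2) Imp.prems(2) by blast+
  have G: "G \<subseteq> S" "\<And>E. E \<in> S \<Longrightarrow> derives G E \<Longrightarrow> E \<in> G"
    using Imp.prems(1) by (auto simp: closed_theories_def)
  show ?case
  proof
    assume sat: "sat (closed_theories S) (\<lambda>G i. Var i \<in> G) G (Imp C D)"
    define H where "H = {E\<in>S. derives (insert C G) E}"
    have H: "H \<in> closed_theories S"
      by (simp add: H_def consequences_closed_theories)
    have "G \<subseteq> H" "C \<in> H"
      using G(1) CD(1) derives_mem by (auto simp: H_def)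
    then have "sat (closed_theories S) (\<lambda>G i. Var i \<in> G) H C"
      using Imp.IH(1)[OF H CD(1)] by blast
    then have "sat (closed_theories S) (\<lambda>G i. Var i \<in> G) H D"
      using sat H \<open>G \<subseteq> H\<close> by simp
    then have "D \<in> H" using Imp.IH(2)[OF H CD(2)] by blast
    then have "derives G (Imp C D)" by (simp add: H_def derives_deduct)
    then show "Imp C D \<in> G" using G(2) Imp.prems(2) by blast
  next
    assume CD_G: "Imp C D \<in> G"
    show "sat (closed_theories S) (\<lambda>G i. Var i \<in> G) G (Imp C D)"
      unfolding sat.simps
    proof (intro ballI impI)
      fix H assume H: "H \<in> closed_theories S" "G \<subseteq> H" "sat (closed_theories S) (\<lambda>G i. Var i \<in> G) H C"
      then have "C \<in> H" "Imp C D \<in> H" using Imp.IH(1)[OF H(1) CD(1)] CD_G by auto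
      then have "derives H D" using derives_mem derives_mp by blast
      then have "D \<in> H" using H(1) CD by (auto simp: closed_theories_def)
      then show "sat (closed_theories S) (\<lambda>G i. Var i \<in> G) H D" using Imp.IH(2) H(1) CD by blast
    qed
  qed
qed simp

lemma univ_model_countermodel:
  assumes A: "A \<in> IFm n" and B: "B \<in> IFm n" and "\<not> prv (Imp A B)"
  shows "\<exists>x\<in>univ_model n. cls n A \<in> x \<and> cls n B \<notin> x"
proof -
  define S where "S = subf A \<union> subf B"
  define K where "K = closed_theories S"
  define c :: "fm set \<Rightarrow> nat \<Rightarrow> bool" where "c = (\<lambda>G i. Var i \<in> G)"
  have S_closed: "Y \<in> S" if "X \<in> S" "Y \<in> subf X" for X Y
    using that subf_trans[of X A] subf_trans[of X B] unfolding S_def by blast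
  have S_IFm: "S \<subseteq> IFm n" using subf_IFm A B by (auto simp: S_def)
  have truth: "G \<in> K \<Longrightarrow> C \<in> S \<Longrightarrow> sat K c G C \<longleftrightarrow> C \<in> G" for G C
    unfolding K_def c_def
    by (rule sat_closed_theories_iff) (use S_closed subf_self S_IFm in \<open>auto simp: IFm_def\<close>)
  have mc: "mono_col K c" by (auto simp: mono_col_def c_def)
  have fin: "finite {v\<in>K. u \<subseteq> v}" for u
    using finite_subf unfolding K_def S_def closed_theories_def by (auto intro: finite_subset)
  define G where "G = {C\<in>S. derives {A} C}"
  have G: "G \<in> K" using consequences_closed_theories by (simp add: G_def K_def)
  have "\<not> derives {A} B"
  proof
    assume "derives {A} B"
    then obtain Ds where "set Ds \<subseteq> {A}" "prv (Imp (conjl Ds) B)" unfolding derives_def by blast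
    moreover have "prv (Imp A (conjl Ds))" if "set Ds \<subseteq> {A}"
      using that prv_refl by (intro prv_conjl_intro) auto
    ultimately show False using prv_trans assms(3) by blast
  qed
  then have "sat K c G A" "\<not> sat K c G B"
    using truth[OF G] subf_self derives_mem by (auto simp: G_def S_def)
  then have "cls n A \<in> theory_map n K c G" "cls n B \<notin> theory_map n K c G"
    using theory_map_mem[OF mc _ G] IFm_Fm A B by auto
  then show ?thesis using theory_map_univ_model[OF mc G fin] by blast
qed

section \<open>The finite poset U(n)_{\<and>,\<rightarrow>}\<close>

definition col :: "nat \<Rightarrow> fm set set \<Rightarrow> nat set" where
  "col n x = {i. i < n \<and> cls n (Var i) \<in> x}"

lemma col_subset: "col n x \<subseteq> {..<n}"
  by (auto simp: col_def)

lemma finite_col: "finite (col n x)"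
  using col_subset finite_subset by blast

lemma col_mono: "x \<subseteq> y \<Longrightarrow> col n x \<subseteq> col n y"
  by (auto simp: col_def)

lemma col_psubset_rank_less:
  assumes "col n x \<subset> col n y"
  shows "n - card (col n y) < n - card (col n x)"
proof -
  have "card (col n x) < card (col n y)" using psubset_card_mono[OF finite_col assms] .
  moreover have "card (col n y) \<le> n" using card_mono[OF finite_lessThan col_subset] by simp
  ultimately show ?thesis by linarith
qed

lemma univ_ci_col_psubset:
  assumes x: "x \<in> univ_ci n" and y: "y \<in> univ_ci n" and "x \<subset> y"
  shows "col n x \<subset> col n y"
proof -
  obtain q where "q < n" "cls n (Var q) \<notin> x" "cls n (Var q) \<in> y"
    using univ_ci_separated[OF x] univ_ci_univ_model[OF y] assms(3) by blast
  then show ?thesis using col_mono[of x y] assms(3) by (auto simp: col_def)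
qed

lemma univ_model_Imp_iff_strict:
  assumes x: "x \<in> univ_model n" and "A \<in> Fm n" "B \<in> Fm n"
  shows "cls n (Imp A B) \<in> x \<longleftrightarrow>
    (cls n A \<in> x \<longrightarrow> cls n B \<in> x) \<and> (\<forall>y\<in>univ_model n. x \<subset> y \<and> cls n A \<in> y \<longrightarrow> cls n B \<in> y)"
  unfolding univ_model_Imp_iff[OF assms] using x by (auto simp: psubset_eq)

lemma univ_model_eqI:
  assumes x: "x \<in> univ_model n" and w: "w \<in> univ_model n"
    and col: "\<And>i. i < n \<Longrightarrow> cls n (Var i) \<in> x \<longleftrightarrow> cls n (Var i) \<in> w"
    and succ: "\<And>y. y \<in> univ_model n \<Longrightarrow> x \<subset> y \<longleftrightarrow> w \<subset> y"
  shows "x = w"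
proof (rule prime_filter_eqI)
  note px = univ_model_prime_filter[OF x] and pw = univ_model_prime_filter[OF w]
  show "prime_filter n w" by (fact pw)
  show "cls n A \<in> x \<longleftrightarrow> cls n A \<in> w" if "A \<in> Fm n" for A
    using that
  proof (induction A)
    case (Imp A B)
    then have "A \<in> Fm n" "B \<in> Fm n" by auto
    then show ?case
      using Imp.IH succ univ_model_Imp_iff_strict[OF x] univ_model_Imp_iff_strict[OF w] by simp
  qed (use col px pw prime_filter_Top prime_filter_Bot prime_filter_And prime_filter_Or in auto)
qed (fact univ_model_prime_filter[OF x])

lemma univ_ci_eqI:
  assumes x: "x \<in> univ_ci n" and w: "w \<in> univ_ci n" and "col n x = col n w"
    and succ: "\<And>y. y \<in> univ_ci n \<Longrightarrow> x \<subset> y \<longleftrightarrow> w \<subset> y"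
  shows "x = w"
proof (rule univ_model_eqI[OF univ_ci_univ_model[OF x] univ_ci_univ_model[OF w]])
  show "cls n (Var i) \<in> x \<longleftrightarrow> cls n (Var i) \<in> w" if "i < n" for i
    using that \<open>col n x = col n w\<close> by (auto simp: col_def set_eq_iff)
  show "x \<subset> y \<longleftrightarrow> w \<subset> y" if "y \<in> univ_model n" for y
    using succ univ_ci_upward[OF x that] univ_ci_upward[OF w that] by blast
qed

text \<open>A point is determined by its colour and its set of strict successors, and the colour
  strictly grows along the order; by induction on the number of missing colours, each
  level of U(n)_{\<and>,\<rightarrow>} injects into the finite set of pairs (colour, set of points
  of the levels above).\<close>

lemma finite_univ_ci: "finite (univ_ci n)"
proof -
  have "finite {x\<in>univ_ci n. n - card (col n x) < m}" for m
  proof (induction m)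
    case (Suc m)
    let ?L = "{x\<in>univ_ci n. n - card (col n x) < Suc m}"
    let ?U = "{x\<in>univ_ci n. n - card (col n x) < m}"
    define g where "g x = (col n x, {y\<in>univ_ci n. x \<subset> y})" for x
    have "y \<in> ?U" if "x \<in> ?L" "y \<in> univ_ci n" "x \<subset> y" for x y
    proof -
      have "col n x \<subset> col n y" using univ_ci_col_psubset that by blast
      then have "n - card (col n y) < n - card (col n x)" by (rule col_psubset_rank_less)
      then show ?thesis using that by simp
    qed
    then have "g ` ?L \<subseteq> Pow {..<n} \<times> Pow ?U"
      by (auto simp: g_def col_def)
    moreover have "finite (Pow {..<n} \<times> Pow ?U)" using Suc.IH by simp
    ultimately have "finite (g ` ?L)" by (rule finite_subset)
    moreover have "inj_on g ?L"
    proof (rule inj_onI)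
      fix x w assume "x \<in> ?L" "w \<in> ?L" "g x = g w"
      then have xw: "x \<in> univ_ci n" "w \<in> univ_ci n" "col n x = col n w"
        and succ: "{y\<in>univ_ci n. x \<subset> y} = {y\<in>univ_ci n. w \<subset> y}"
        by (simp_all add: g_def)
      show "x = w"
      proof (rule univ_ci_eqI[OF xw])
        show "x \<subset> y \<longleftrightarrow> w \<subset> y" if "y \<in> univ_ci n" for y
          using that succ by blast
      qed
    qed
    ultimately show ?case by (rule finite_imageD)
  qed simp
  moreover have "{x\<in>univ_ci n. n - card (col n x) < Suc n} = univ_ci n" by auto
  ultimately show ?thesis by metis
qed

text \<open>Inductive step of the construction of the de Jongh-type formula of a point x:
  q separates x, and Psi y is already the formula of every point y of strictly larger colour.\<close>

context
  fixes n :: nat and x :: "fm set set" and q :: nat and Psi :: "fm set set \<Rightarrow> fm"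
  assumes x: "x \<in> univ_ci n"
    and q: "q < n" "cls n (Var q) \<notin> x"
    and q_above: "\<And>y. y \<in> univ_model n \<Longrightarrow> x \<subset> y \<Longrightarrow> cls n (Var q) \<in> y"
    and Psi_IFm: "\<And>y. y \<in> univ_ci n \<Longrightarrow> col n x \<subset> col n y \<Longrightarrow> Psi y \<in> IFm n"
    and Psi: "\<And>y z. y \<in> univ_ci n \<Longrightarrow> col n x \<subset> col n y \<Longrightarrow> z \<in> univ_ci n \<Longrightarrow>
                cls n (Psi y) \<in> z \<longleftrightarrow> \<not> z \<subseteq> y"
begin

lemma jongh_conditions_self:
  shows "\<And>y. y \<in> univ_ci n \<Longrightarrow> col n x \<subset> col n y \<Longrightarrow> \<not> x \<subseteq> y \<Longrightarrow> cls n (Psi y) \<in> x"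
    and "\<And>y. y \<in> univ_ci n \<Longrightarrow> x \<subset> y \<Longrightarrow> cls n (Imp (Psi y) (Var q)) \<in> x"
proof -
  show "cls n (Psi y) \<in> x" if "y \<in> univ_ci n" "col n x \<subset> col n y" "\<not> x \<subseteq> y" for y
    using Psi[OF that(1,2) x] that(3) by blast
next
  fix y assume y: "y \<in> univ_ci n" "x \<subset> y"
  then have xy: "col n x \<subset> col n y" using univ_ci_col_psubset[OF x] by blast
  have "cls n (Var q) \<in> z" if "z \<in> univ_ci n" "x \<subseteq> z" "cls n (Psi y) \<in> z" for z
  proof -
    have "x \<noteq> z" using Psi[OF y(1) xy that(1)] that(3) y(2) by blast
    then show ?thesis using q_above univ_ci_univ_model that(1,2) by blast
  qed
  then show "cls n (Imp (Psi y) (Var q)) \<in> x"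
    using univ_ci_Imp_iff[OF x IFm_Fm[OF Psi_IFm[OF y(1) xy]]] q(1) by simp
qed

lemma jongh_conditions_eq:
  assumes w: "w \<in> univ_ci n" "col n x \<subseteq> col n w" "cls n (Var q) \<notin> w"
    and side: "\<And>y. y \<in> univ_ci n \<Longrightarrow> col n x \<subset> col n y \<Longrightarrow> \<not> x \<subseteq> y \<Longrightarrow> cls n (Psi y) \<in> w"
    and succ: "\<And>y. y \<in> univ_ci n \<Longrightarrow> x \<subset> y \<Longrightarrow> cls n (Imp (Psi y) (Var q)) \<in> w"
  shows "w = x"
proof (cases "col n x = col n w")
  case False
  then have xw: "col n x \<subset> col n w" using w(2) by blast
  show ?thesis
  proof (cases "x \<subseteq> w")
    case True
    then show ?thesis using q_above univ_ci_univ_model[OF w(1)] w(3) xw by blast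
  next
    case False
    then show ?thesis using side[OF w(1) xw] Psi[OF w(1) xw w(1)] by blast
  qed
next
  case True
  note pw = univ_ci_prime_filter[OF w(1)]
  show ?thesis
  proof (rule univ_ci_eqI[OF w(1) x True[symmetric]])
    fix y assume y: "y \<in> univ_ci n"
    show "w \<subset> y \<longleftrightarrow> x \<subset> y"
    proof
      assume "x \<subset> y"
      then have xy: "col n x \<subset> col n y" using univ_ci_col_psubset[OF x y] by blast
      have "cls n (Psi y) \<notin> w"
        using prime_filter_mp[OF pw IFm_Fm[OF Psi_IFm[OF y xy]]] succ[OF y \<open>x \<subset> y\<close>] w(3) q(1)
        by auto
      then show "w \<subset> y" using Psi[OF y xy w(1)] xy True by blast
    next
      assume wy: "w \<subset> y"
      then have xy: "col n x \<subset> col n y" using univ_ci_col_psubset[OF w(1) y] True by simp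
      have "x \<subseteq> y"
      proof (rule ccontr)
        assume "\<not> x \<subseteq> y"
        then have "cls n (Psi y) \<in> y" using side[OF y xy] wy by blast
        then show False using Psi[OF y xy y] by blast
      qed
      then show "x \<subset> y" using xy by blast
    qed
  qed
qed

end

text \<open>With q a variable separating x, the formula of x is chi \<rightarrow> q, where chi collects the
  colour of x, the formulas of the points of larger colour not above x, and the implications
  Psi y \<rightarrow> q for the strict successors y of x; x is the only point satisfying chi but not q.\<close>

lemma jongh_formula:
  assumes "x \<in> univ_ci n"
  shows "\<exists>\<psi>\<in>IFm n. \<forall>y\<in>univ_ci n. cls n \<psi> \<in> y \<longleftrightarrow> \<not> y \<subseteq> x"
  using assms
proof (induction "n - card (col n x)" arbitrary: x rule: less_induct)
  case less
  note x = less.prems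
  obtain q where q: "q < n" "cls n (Var q) \<notin> x"
    and q_above: "\<And>y. y \<in> univ_model n \<Longrightarrow> x \<subset> y \<Longrightarrow> cls n (Var q) \<in> y"
    using univ_ci_separated[OF x] by blast
  define Y where "Y = {y\<in>univ_ci n. col n x \<subset> col n y}"
  have "\<forall>y\<in>Y. \<exists>\<psi>\<in>IFm n. \<forall>z\<in>univ_ci n. cls n \<psi> \<in> z \<longleftrightarrow> \<not> z \<subseteq> y"
  proof
    fix y assume "y \<in> Y"
    then show "\<exists>\<psi>\<in>IFm n. \<forall>z\<in>univ_ci n. cls n \<psi> \<in> z \<longleftrightarrow> \<not> z \<subseteq> y"
      using less.hyps[OF col_psubset_rank_less] by (simp add: Y_def)
  qed
  then obtain Psi where Psi_IFm: "\<And>y. y \<in> Y \<Longrightarrow> Psi y \<in> IFm n"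
    and Psi: "\<And>y z. y \<in> Y \<Longrightarrow> z \<in> univ_ci n \<Longrightarrow> cls n (Psi y) \<in> z \<longleftrightarrow> \<not> z \<subseteq> y"
    by metis
  define S where "S = Var ` col n x \<union> Psi ` {y\<in>Y. \<not> x \<subseteq> y}
    \<union> (\<lambda>y. Imp (Psi y) (Var q)) ` {y\<in>univ_ci n. x \<subset> y}"
  have succ_Y: "{y\<in>univ_ci n. x \<subset> y} \<subseteq> Y"
    using univ_ci_col_psubset[OF x] by (auto simp: Y_def)
  have "finite Y" using finite_univ_ci by (simp add: Y_def)
  then have "finite S" using finite_univ_ci by (simp add: S_def finite_col)
  moreover have "S \<subseteq> IFm n" using Psi_IFm succ_Y q(1) by (auto simp: S_def col_def)
  ultimately obtain chi where chi: "chi \<in> IFm n"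
    and chi_iff: "\<And>w. prime_filter n w \<Longrightarrow> cls n chi \<in> w \<longleftrightarrow> (\<forall>A\<in>S. cls n A \<in> w)"
    by (rule ex_conj_formula) auto
  have chi_S: "cls n chi \<in> w \<longleftrightarrow> col n x \<subseteq> col n w \<and> (\<forall>y\<in>Y. \<not> x \<subseteq> y \<longrightarrow> cls n (Psi y) \<in> w)
      \<and> (\<forall>y\<in>univ_ci n. x \<subset> y \<longrightarrow> cls n (Imp (Psi y) (Var q)) \<in> w)" if "w \<in> univ_ci n" for w
  proof -
    have "col n x \<subseteq> col n w \<longleftrightarrow> (\<forall>i\<in>col n x. cls n (Var i) \<in> w)"
      by (auto simp: col_def)
    then show ?thesis
      unfolding chi_iff[OF univ_ci_prime_filter[OF that]] S_def ball_Un by auto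
  qed
  have "\<And>y. y \<in> univ_ci n \<Longrightarrow> col n x \<subset> col n y \<Longrightarrow> Psi y \<in> IFm n"
    and "\<And>y z. y \<in> univ_ci n \<Longrightarrow> col n x \<subset> col n y \<Longrightarrow> z \<in> univ_ci n \<Longrightarrow>
           cls n (Psi y) \<in> z \<longleftrightarrow> \<not> z \<subseteq> y"
    using Psi_IFm Psi by (simp_all add: Y_def)
  note ctx = x q q_above this
  have chi_x: "cls n chi \<in> x"
    unfolding chi_S[OF x] using jongh_conditions_self[OF ctx] by (auto simp: Y_def)
  have unique: "w = x" if w: "w \<in> univ_ci n" "cls n chi \<in> w" "cls n (Var q) \<notin> w" for w
  proof (rule jongh_conditions_eq[OF ctx w(1) _ w(3)])
    show "col n x \<subseteq> col n w" using chi_S[OF w(1)] w(2) by blast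
    show "cls n (Psi y) \<in> w" if "y \<in> univ_ci n" "col n x \<subset> col n y" "\<not> x \<subseteq> y" for y
      using chi_S[OF w(1)] w(2) that by (simp add: Y_def)
    show "cls n (Imp (Psi y) (Var q)) \<in> w" if "y \<in> univ_ci n" "x \<subset> y" for y
      using chi_S[OF w(1)] w(2) that by blast
  qed
  have "cls n (Imp chi (Var q)) \<in> y \<longleftrightarrow> \<not> y \<subseteq> x" if "y \<in> univ_ci n" for y
  proof -
    have "Var q \<in> Fm n" using q(1) by simp
    note Imp_iff = univ_ci_Imp_iff[OF that IFm_Fm[OF chi] this]
    show ?thesis
    proof
      assume "cls n (Imp chi (Var q)) \<in> y"
      then show "\<not> y \<subseteq> x" using Imp_iff chi_x q(2) x by blast
    next
      assume "\<not> y \<subseteq> x"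
      then have "cls n (Var q) \<in> w" if "w \<in> univ_ci n" "y \<subseteq> w" "cls n chi \<in> w" for w
        using unique that by blast
      then show "cls n (Imp chi (Var q)) \<in> y" using Imp_iff by blast
    qed
  qed
  moreover have "Imp chi (Var q) \<in> IFm n" using chi q(1) by simp
  ultimately show ?case by blast
qed

definition truth_set :: "nat \<Rightarrow> fm \<Rightarrow> fm set set set" where
  "truth_set n A = {x\<in>univ_ci n. cls n A \<in> x}"

lemma truth_set_upsets: "truth_set n A \<in> upsets (univ_ci n) (\<subseteq>)"
  by (auto simp: truth_set_def upsets_def)

text \<open>An up-set U is the truth set of the conjunction of the formulas of the points outside U.\<close>

lemma upsets_truth_set:
  assumes U: "U \<in> upsets (univ_ci n) (\<subseteq>)"
  shows "\<exists>A\<in>IFm n. truth_set n A = U"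
proof -
  have "\<forall>x\<in>univ_ci n - U. \<exists>\<psi>\<in>IFm n. \<forall>y\<in>univ_ci n. cls n \<psi> \<in> y \<longleftrightarrow> \<not> y \<subseteq> x"
    using jongh_formula by blast
  then obtain Psi where Psi_IFm: "\<And>x. x \<in> univ_ci n - U \<Longrightarrow> Psi x \<in> IFm n"
    and Psi: "\<And>x y. x \<in> univ_ci n - U \<Longrightarrow> y \<in> univ_ci n \<Longrightarrow> cls n (Psi x) \<in> y \<longleftrightarrow> \<not> y \<subseteq> x"
    by metis
  have "finite (Psi ` (univ_ci n - U))" using finite_univ_ci by simp
  moreover have "Psi ` (univ_ci n - U) \<subseteq> IFm n" using Psi_IFm by blast
  ultimately obtain A where A: "A \<in> IFm n"
    and A_iff: "\<And>y. prime_filter n y \<Longrightarrow> cls n A \<in> y \<longleftrightarrow> (\<forall>B\<in>Psi ` (univ_ci n - U). cls n B \<in> y)"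
    by (rule ex_conj_formula) auto
  have "y \<in> truth_set n A \<longleftrightarrow> y \<in> U" for y
  proof (cases "y \<in> univ_ci n")
    case True
    then have "y \<in> truth_set n A \<longleftrightarrow> (\<forall>x\<in>univ_ci n - U. \<not> y \<subseteq> x)"
      using A_iff[OF univ_ci_prime_filter] Psi by (simp add: truth_set_def)
    also have "\<dots> \<longleftrightarrow> y \<in> U" using U True by (auto simp: upsets_def)
    finally show ?thesis .
  qed (use U in \<open>auto simp: truth_set_def upsets_def\<close>)
  then show ?thesis using A by blast
qed

lemma univ_ci_refutes:
  assumes A: "A \<in> IFm n" and B: "B \<in> IFm n" and "\<not> prv (Imp A B)"
  shows "\<exists>x\<in>univ_ci n. cls n A \<in> x \<and> cls n B \<notin> x"
proof -
  obtain y where y: "y \<in> univ_model n" "cls n A \<in> y" "cls n B \<notin> y"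
    using univ_model_countermodel[OF assms] by blast
  obtain s where s: "s \<in> univ_sep n" "y \<subseteq> s" "cls n B \<notin> s"
    using separated_point_refuting[OF y(1) B y(3)] by blast
  let ?x = "theory_map n (univ_sep n) (canon_col n) s"
  have "cls n A \<in> ?x" "cls n B \<notin> ?x"
    using theory_map_univ_sep_mem[OF s(1)] A B s(2,3) y(2) by blast+
  then show ?thesis using theory_map_univ_sep_in_univ_ci[OF s(1)] by blast
qed

lemma truth_set_eq_iff:
  assumes "A \<in> IFm n" "B \<in> IFm n"
  shows "truth_set n A = truth_set n B \<longleftrightarrow> ipc_equiv A B"
proof
  assume "truth_set n A = truth_set n B"
  then have "prv (Imp A B)" "prv (Imp B A)"
    using univ_ci_refutes[OF assms] univ_ci_refutes[OF assms(2,1)]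
    by (auto simp: truth_set_def set_eq_iff)
  then show "ipc_equiv A B" by (simp add: ipc_equiv_def)
next
  assume "ipc_equiv A B"
  then have "cls n A = cls n B" using cls_eq_iff IFm_Fm assms by blast
  then show "truth_set n A = truth_set n B" by (simp add: truth_set_def)
qed

lemma truth_set_And:
  "A \<in> Fm n \<Longrightarrow> B \<in> Fm n \<Longrightarrow> truth_set n (And A B) = truth_set n A \<inter> truth_set n B"
  using prime_filter_And[OF univ_ci_prime_filter] by (auto simp: truth_set_def)

lemma truth_set_Imp:
  "A \<in> Fm n \<Longrightarrow> B \<in> Fm n \<Longrightarrow>
     truth_set n (Imp A B) = up_imp (univ_ci n) (\<subseteq>) (truth_set n A) (truth_set n B)"
  using univ_ci_Imp_iff by (auto simp: truth_set_def up_imp_def)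

theorem corollary3p17:
  fixes n :: nat
  shows "\<exists>h :: fm \<Rightarrow> fm set set set.
    (\<forall>A\<in>IFm n. h A \<in> upsets (univ_ci n) (\<subseteq>)) \<and>
    (\<forall>U\<in>upsets (univ_ci n) (\<subseteq>). \<exists>A\<in>IFm n. h A = U) \<and>
    (\<forall>A\<in>IFm n. \<forall>B\<in>IFm n. h A = h B \<longleftrightarrow> ipc_equiv A B) \<and>
    (\<forall>A\<in>IFm n. \<forall>B\<in>IFm n. h (And A B) = h A \<inter> h B) \<and>
    (\<forall>A\<in>IFm n. \<forall>B\<in>IFm n. h (Imp A B) = up_imp (univ_ci n) (\<subseteq>) (h A) (h B))"
proof (intro exI[of _ "truth_set n"] conjI ballI)
  show "truth_set n A \<in> upsets (univ_ci n) (\<subseteq>)" for A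
    by (rule truth_set_upsets)
  show "\<exists>A\<in>IFm n. truth_set n A = U" if "U \<in> upsets (univ_ci n) (\<subseteq>)" for U
    using that by (rule upsets_truth_set)
  show "truth_set n A = truth_set n B \<longleftrightarrow> ipc_equiv A B" if "A \<in> IFm n" "B \<in> IFm n" for A B
    using that by (rule truth_set_eq_iff)
  show "truth_set n (And A B) = truth_set n A \<inter> truth_set n B" if "A \<in> IFm n" "B \<in> IFm n" for A B
    using truth_set_And[OF IFm_Fm IFm_Fm] that .
  show "truth_set n (Imp A B) = up_imp (univ_ci n) (\<subseteq>) (truth_set n A) (truth_set n B)"
    if "A \<in> IFm n" "B \<in> IFm n" for A B
    using truth_set_Imp[OF IFm_Fm IFm_Fm] that .
qed

end
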